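(* Let $G=(V,E)$ be a graph and $k\ge1$ an integer, and let $G_k$ be the graph obtained from $G$ by cloning every vertex exactly $k-1$ times. For a labeling $\mathbf{x}=(x_w)_{w\in V(G_k)}$ by indeterminates define the labeling $\mathbf{X}$ of $G$ by $X_a=(1+x_{a_1})(1+x_{a_2})\cdots(1+x_{a_k})-1$ for $a\in V$. Then $P(G_k;u,\mathbf{x})=P(G;u,\mathbf{X})$.
   Context: All graphs are finite and undirected, without multiple edges but possibly with self loops. For $A\subseteq V$, $G[A]$ is the induced subgraph; $rk(G)$ is the $\mathbb{F}_2$-rank of the adjacency matrix $(m_{ij})$ (with $m_{ij}=1$ iff $\{i,j\}\in E$, so $m_{ii}=1$ iff $i$ has a self loop; empty graph: rank $0$). For indeterminates $x_v$, $x_A=\prod_{v\in A}x_v$ and $P(G;u,\mathbf{x})=\sum_{A\subseteq V}x_Au^{rk(G[A])}$, with $0^0=1$. The graph $G_k$ ("each vertex cloned $k-1$ times") has vertex set $\{a_i: a\in V,\ 1\le i\le k\}$; for distinct $a,b\in V$, $a_i$ and $b_j$ are adjacent iff $\{a,b\}\in E$; and $a_i,a_j$ are adjacent (for $i=j$: $a_i$ carries a self loop) iff $a$ carries a self loop in $G$. Equivalently, $G_k$ arises by repeatedly applying the single-vertex cloning operation (a new vertex $a'$ joined to all neighbours of $a$ other than $a$, plus the edge $\{a,a'\}$ and a self loop at $a'$ if $a$ has a self loop). *)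

theory Defs
  imports Main
begin

text \<open>A graph is given by a finite vertex set V and a symmetric adjacency relation E
  (self loops E a a allowed, no multiple edges).\<close>

text \<open>A set S of vertices of A has F2-linearly independent rows in the adjacency matrix
  of G[A]: no nonempty subset T of S has rows summing (mod 2) to the zero vector.\<close>
definition f2_indep_rows :: "('a \<Rightarrow> 'a \<Rightarrow> bool) \<Rightarrow> 'a set \<Rightarrow> 'a set \<Rightarrow> bool" where
  "f2_indep_rows E A S \<longleftrightarrow> S \<subseteq> A \<and>
     (\<forall>T. T \<subseteq> S \<and> T \<noteq> {} \<longrightarrow> (\<exists>w\<in>A. odd (card {t\<in>T. E t w})))"

text \<open>rk(G[A]): F2-rank of the adjacency matrix of the induced subgraph G[A]
  (maximal number of F2-linearly independent rows); 0 for A = {}.\<close>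
definition f2_rank :: "('a \<Rightarrow> 'a \<Rightarrow> bool) \<Rightarrow> 'a set \<Rightarrow> nat" where
  "f2_rank E A = Max (card ` {S. f2_indep_rows E A S})"

definition interlace_P :: "'a set \<Rightarrow> ('a \<Rightarrow> 'a \<Rightarrow> bool) \<Rightarrow> 'r::comm_ring_1 \<Rightarrow> ('a \<Rightarrow> 'r) \<Rightarrow> 'r" where
  "interlace_P V E u x = (\<Sum>A\<in>Pow V. (\<Prod>v\<in>A. x v) * u ^ f2_rank E A)"

definition clone_vertices :: "'a set \<Rightarrow> nat \<Rightarrow> ('a \<times> nat) set" where
  "clone_vertices V k = V \<times> {1..k}"

definition clone_adj :: "('a \<Rightarrow> 'a \<Rightarrow> bool) \<Rightarrow> ('a \<times> nat) \<Rightarrow> ('a \<times> nat) \<Rightarrow> bool" where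
  "clone_adj E p q = (if fst p \<noteq> fst q then E (fst p) (fst q) else E (fst p) (fst p))"

end

theory Submission
  imports Defs "HOL-Library.FuncSet"
begin

text \<open>
  In G_k every clone a_i is adjacent to b_j exactly when a and b are adjacent
  in G (the clones of a looped vertex form a looped clique), so the adjacency of G_k is the
  adjacency of G pulled back along the projection a_i \<mapsto> a.  Two vertices with the same
  image have equal rows, hence an independent set of rows contains at most one vertex over
  each a, and independent row sets of G_k[A] correspond to independent row sets of
  G[fst ` A] of the same size.  Therefore rk(G_k[A]) = rk(G[fst ` A]).

  The sum defining P(G_k;u,x) is then grouped according to the shadow B = fst ` A.  The sets
  A \<subseteq> V \<times> {1..k} with shadow B are exactly the sets \<Union>_{a\<in>B} {a} \<times> C_a with every C_a a
  nonempty subset of {1..k}; summing x_A over them factorises into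
  \<Prod>_{a\<in>B} ((1+x_{a_1})\<cdots>(1+x_{a_k}) - 1) = X_B, which gives P(G;u,X).
\<close>

lemma clone_adj_eq: "clone_adj E = (\<lambda>p q. E (fst p) (fst q))"
  by (auto simp: clone_adj_def fun_eq_iff)

lemma f2_indep_rowsD:
  assumes "f2_indep_rows E A S" and "T \<subseteq> S" and "T \<noteq> {}"
  shows "\<exists>w\<in>A. odd (card {t\<in>T. E t w})"
  using assms by (simp add: f2_indep_rows_def)

lemma card_filter_image:
  assumes "inj_on f T"
  shows "card {t\<in>T. P (f t)} = card {s\<in>f ` T. P s}"
proof -
  have "inj_on f {t\<in>T. P (f t)}" using assms by (rule inj_on_subset) auto
  then have "card {t\<in>T. P (f t)} = card (f ` {t\<in>T. P (f t)})" by (rule card_image[symmetric])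
  also have "f ` {t\<in>T. P (f t)} = {s\<in>f ` T. P s}" by auto
  finally show ?thesis .
qed

text \<open>Vertices with the same image have identical rows, so their rows sum to zero:
  an independent row set of the pulled-back relation contains no two of them.\<close>
lemma lifted_indep_rows_inj:
  assumes indep: "f2_indep_rows (\<lambda>p q. E (f p) (f q)) A S"
  shows "inj_on f S"
proof (rule inj_onI, rule ccontr)
  fix p q assume pq: "p \<in> S" "q \<in> S" "f p = f q" "p \<noteq> q"
  have "even (card {t\<in>{p, q}. E (f t) (f w)})" for w
  proof (cases "E (f p) (f w)")
    case True
    then have "{t\<in>{p, q}. E (f t) (f w)} = {p, q}" using pq by auto
    then show ?thesis using pq by simp
  next
    case False
    then have "{t\<in>{p, q}. E (f t) (f w)} = {}" using pq by auto
    then show ?thesis by (metis card.empty even_zero)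
  qed
  moreover have "\<exists>w\<in>A. odd (card {t\<in>{p, q}. E (f t) (f w)})"
    using f2_indep_rowsD[OF indep, of "{p, q}"] pq by simp
  ultimately show False by blast
qed

lemma lifted_indep_rows_project:
  assumes indep: "f2_indep_rows (\<lambda>p q. E (f p) (f q)) A S"
  shows "f2_indep_rows E (f ` A) (f ` S)"
  unfolding f2_indep_rows_def
proof (intro conjI allI impI)
  show "f ` S \<subseteq> f ` A" using indep by (auto simp: f2_indep_rows_def)
  fix T assume T: "T \<subseteq> f ` S \<and> T \<noteq> {}"
  define T' where "T' = {p\<in>S. f p \<in> T}"
  have image_T': "f ` T' = T" using T by (auto simp: T'_def)
  then have "T' \<subseteq> S" "T' \<noteq> {}" using T by (auto simp: T'_def)
  then obtain w where w: "w \<in> A" and odd: "odd (card {t\<in>T'. E (f t) (f w)})"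
    using f2_indep_rowsD[OF indep] by blast
  have "inj_on f T'"
    using lifted_indep_rows_inj[of E f A S, OF indep] by (rule inj_on_subset) (auto simp: T'_def)
  then have "card {t\<in>T'. E (f t) (f w)} = card {s\<in>T. E s (f w)}"
    using card_filter_image[of f T' "\<lambda>s. E s (f w)"] image_T' by simp
  then have "odd (card {s\<in>T. E s (f w)})" using odd by simp
  then show "\<exists>w\<in>f ` A. odd (card {t\<in>T. E t w})" using imageI[OF w] by (rule bexI)
qed

lemma indep_rows_lift:
  assumes indep: "f2_indep_rows E (f ` A) S"
  shows "f2_indep_rows (\<lambda>p q. E (f p) (f q)) A (inv_into A f ` S)"
  unfolding f2_indep_rows_def
proof (intro conjI allI impI)
  let ?\<sigma> = "inv_into A f"
  have S: "S \<subseteq> f ` A" using indep by (simp add: f2_indep_rows_def)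
  then have \<sigma>_in: "?\<sigma> s \<in> A" and f_\<sigma>: "f (?\<sigma> s) = s" if "s \<in> S" for s
    using that by (auto intro: inv_into_into f_inv_into_f)
  show "?\<sigma> ` S \<subseteq> A" using \<sigma>_in by blast
  fix T' assume T': "T' \<subseteq> ?\<sigma> ` S \<and> T' \<noteq> {}"
  have "f ` T' \<subseteq> S" using T' f_\<sigma> by auto
  moreover have "f ` T' \<noteq> {}" using T' by auto
  ultimately obtain w where w: "w \<in> f ` A" and odd: "odd (card {s\<in>f ` T'. E s w})"
    using f2_indep_rowsD[OF indep] by blast
  have "inj_on f (?\<sigma> ` S)" using f_\<sigma> by (auto intro!: inj_onI)
  then have "inj_on f T'" using T' by (meson inj_on_subset)
  then have "card {t\<in>T'. E (f t) (f (?\<sigma> w))} = card {s\<in>f ` T'. E s w}"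
    using card_filter_image[of f T' "\<lambda>s. E s w"] by (simp add: f_inv_into_f[OF w])
  then have "odd (card {t\<in>T'. E (f t) (f (?\<sigma> w))})" using odd by simp
  then show "\<exists>w\<in>A. odd (card {t\<in>T'. E (f t) (f w)})"
    using inv_into_into[OF w] by (rule bexI)
qed

lemma f2_rank_lift: "f2_rank (\<lambda>p q. E (f p) (f q)) A = f2_rank E (f ` A)"
proof -
  have "card ` {S. f2_indep_rows (\<lambda>p q. E (f p) (f q)) A S} = card ` {S. f2_indep_rows E (f ` A) S}"
  proof (intro equalityI subsetI)
    fix n assume "n \<in> card ` {S. f2_indep_rows (\<lambda>p q. E (f p) (f q)) A S}"
    then obtain S where S: "f2_indep_rows (\<lambda>p q. E (f p) (f q)) A S" and n: "n = card S" by blast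
    have "n = card (f ` S)" using n card_image[OF lifted_indep_rows_inj[of E f A S, OF S]] by simp
    then show "n \<in> card ` {S. f2_indep_rows E (f ` A) S}"
      using lifted_indep_rows_project[of E f A S, OF S] by blast
  next
    fix n assume "n \<in> card ` {S. f2_indep_rows E (f ` A) S}"
    then obtain S where S: "f2_indep_rows E (f ` A) S" and n: "n = card S" by blast
    have "inj_on (inv_into A f) S"
      using S by (auto intro: inj_on_inv_into simp: f2_indep_rows_def)
    then have "n = card (inv_into A f ` S)" using n by (simp add: card_image)
    then show "n \<in> card ` {S. f2_indep_rows (\<lambda>p q. E (f p) (f q)) A S}"
      using indep_rows_lift[OF S] by blast
  qed
  then show ?thesis by (simp add: f2_rank_def)
qed

lemma prod_one_plus_minus_one:
  fixes y :: "'i \<Rightarrow> 'r::comm_ring_1"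
  assumes "finite K"
  shows "(\<Prod>i\<in>K. 1 + y i) - 1 = (\<Sum>C\<in>Pow K - {{}}. \<Prod>i\<in>C. y i)"
proof -
  have "(\<Prod>i\<in>K. 1 + y i) = (\<Sum>C\<in>Pow K. \<Prod>i\<in>C. y i)"
    using prod_add[OF assms, of y "\<lambda>_. 1"] by (simp add: add.commute)
  also have "\<dots> = 1 + (\<Sum>C\<in>Pow K - {{}}. \<Prod>i\<in>C. y i)"
    using sum.remove[of "Pow K" "{}" "\<lambda>C. \<Prod>i\<in>C. y i"] assms by simp
  finally show ?thesis by simp
qed

lemma Sigma_bij_shadow:
  "bij_betw (Sigma B) (PiE B (\<lambda>_. Pow K - {{}})) {A. A \<subseteq> B \<times> K \<and> fst ` A = B}"
proof (rule bij_betwI')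
  fix f g assume f: "f \<in> PiE B (\<lambda>_. Pow K - {{}})" and g: "g \<in> PiE B (\<lambda>_. Pow K - {{}})"
  show "(Sigma B f = Sigma B g) = (f = g)"
  proof
    assume eq: "Sigma B f = Sigma B g"
    have "f a = g a" for a
      using eq f g by (cases "a \<in> B") (auto simp: PiE_def extensional_def)
    then show "f = g" by auto
  qed simp
next
  fix f assume f: "f \<in> PiE B (\<lambda>_. Pow K - {{}})"
  have "B \<subseteq> fst ` Sigma B f"
  proof
    fix a assume a: "a \<in> B"
    then obtain i where "i \<in> f a" using f by auto
    then show "a \<in> fst ` Sigma B f" using a by force
  qed
  moreover have "Sigma B f \<subseteq> B \<times> K" using f by (auto simp: PiE_def Pi_def)
  ultimately show "Sigma B f \<in> {A. A \<subseteq> B \<times> K \<and> fst ` A = B}" by auto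
next
  fix A assume A: "A \<in> {A. A \<subseteq> B \<times> K \<and> fst ` A = B}"
  define f where "f = restrict (\<lambda>a. {i. (a, i) \<in> A}) B"
  have "f \<in> PiE B (\<lambda>_. Pow K - {{}})"
    using A by (auto simp: f_def PiE_def Pi_def)
  moreover have "A = Sigma B f" using A by (auto simp: f_def intro: rev_image_eqI split: if_splits)
  ultimately show "\<exists>f\<in>PiE B (\<lambda>_. Pow K - {{}}). A = Sigma B f" by blast
qed

lemma shadow_sum:
  fixes x :: "'a \<times> 'i \<Rightarrow> 'r::comm_ring_1"
  assumes fK: "finite K" and fB: "finite B"
  shows "(\<Sum>A | A \<subseteq> B \<times> K \<and> fst ` A = B. \<Prod>v\<in>A. x v)
        = (\<Prod>a\<in>B. (\<Prod>i\<in>K. 1 + x (a, i)) - 1)"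
proof -
  have "(\<Prod>a\<in>B. (\<Prod>i\<in>K. 1 + x (a, i)) - 1) = (\<Prod>a\<in>B. \<Sum>C\<in>Pow K - {{}}. \<Prod>i\<in>C. x (a, i))"
    by (simp add: prod_one_plus_minus_one[OF fK])
  also have "\<dots> = (\<Sum>f\<in>PiE B (\<lambda>_. Pow K - {{}}). \<Prod>a\<in>B. \<Prod>i\<in>f a. x (a, i))"
    using fB fK by (intro prod_sum_PiE) auto
  also have "\<dots> = (\<Sum>f\<in>PiE B (\<lambda>_. Pow K - {{}}). \<Prod>v\<in>Sigma B f. x v)"
  proof (rule sum.cong[OF refl])
    fix f assume "f \<in> PiE B (\<lambda>_. Pow K - {{}})"
    then have "\<forall>a\<in>B. finite (f a)" using fK by (auto intro: finite_subset)
    then show "(\<Prod>a\<in>B. \<Prod>i\<in>f a. x (a, i)) = (\<Prod>v\<in>Sigma B f. x v)"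
      using prod.Sigma[OF fB, of f "\<lambda>a i. x (a, i)"] by simp
  qed
  also have "\<dots> = (\<Sum>A | A \<subseteq> B \<times> K \<and> fst ` A = B. \<Prod>v\<in>A. x v)"
    using Sigma_bij_shadow by (rule sum.reindex_bij_betw)
  finally show ?thesis by simp
qed

theorem mainTheorem3:
  fixes V :: "'a set" and E :: "'a \<Rightarrow> 'a \<Rightarrow> bool" and k :: nat
    and u :: "'r::comm_ring_1" and x :: "'a \<times> nat \<Rightarrow> 'r"
  assumes "finite V"
    and "\<And>a b. E a b = E b a"
    and "k \<ge> 1"
  shows "interlace_P (clone_vertices V k) (clone_adj E) u x
       = interlace_P V E u (\<lambda>a. (\<Prod>i\<in>{1..k}. 1 + x (a, i)) - 1)"
proof -
  let ?K = "{1..k}" and ?X = "\<lambda>a. (\<Prod>i\<in>{1..k}. 1 + x (a, i)) - 1"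
  have "interlace_P (clone_vertices V k) (clone_adj E) u x
      = (\<Sum>A\<in>Pow (V \<times> ?K). (\<Prod>v\<in>A. x v) * u ^ f2_rank E (fst ` A))"
    by (simp add: interlace_P_def clone_vertices_def clone_adj_eq f2_rank_lift)
  also have "\<dots> = (\<Sum>B\<in>Pow V. \<Sum>A | A \<in> Pow (V \<times> ?K) \<and> fst ` A = B.
                      (\<Prod>v\<in>A. x v) * u ^ f2_rank E (fst ` A))"
    using assms(1) by (intro sum.group[symmetric]) auto
  also have "\<dots> = (\<Sum>B\<in>Pow V. (\<Sum>A | A \<subseteq> B \<times> ?K \<and> fst ` A = B. \<Prod>v\<in>A. x v) * u ^ f2_rank E B)"
  proof (rule sum.cong[OF refl])
    fix B assume "B \<in> Pow V"
    then have "{A. A \<in> Pow (V \<times> ?K) \<and> fst ` A = B} = {A. A \<subseteq> B \<times> ?K \<and> fst ` A = B}"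
      by (auto intro: rev_image_eqI)
    then show "(\<Sum>A | A \<in> Pow (V \<times> ?K) \<and> fst ` A = B. (\<Prod>v\<in>A. x v) * u ^ f2_rank E (fst ` A))
             = (\<Sum>A | A \<subseteq> B \<times> ?K \<and> fst ` A = B. \<Prod>v\<in>A. x v) * u ^ f2_rank E B"
      by (simp add: sum_distrib_right)
  qed
  also have "\<dots> = (\<Sum>B\<in>Pow V. (\<Prod>a\<in>B. ?X a) * u ^ f2_rank E B)"
    using assms(1) by (intro sum.cong[OF refl]) (simp add: shadow_sum finite_subset)
  also have "\<dots> = interlace_P V E u ?X"
    by (simp add: interlace_P_def)
  finally show ?thesis .
qed

end
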